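(* Let $d\ge2$, let $p,q\in\mathbb{H}^d$, and let $t$ be the highest point (maximal $z$-coordinate) on the geodesic segment $pq$. Let $C_t$ be the tile of $T^0$ containing $t$, and let $\pi_x(C_t)\subset\mathbb{R}^{d-1}$ be its projection to the $x$-coordinates. Then the Euclidean diameter of $\pi_x(C_t)$ is strictly greater than $\|x(p)-x(q)\|/4$.
   Context: Half-space model: points of $\mathbb{H}^d$ are $(x,z)\in\mathbb{R}^{d-1}\times\mathbb{R}_{>0}$; geodesics are vertical segments or arcs of Euclidean circles orthogonal to $\{z=0\}$. Binary tiling $T^0$: let $C_0$ be the Euclidean box $[0,\tfrac{1}{\sqrt{d-1}}]^{d-1}\times[1,2]$; the tiles of $T^0$ are the images of $C_0$ under $(x,z)\mapsto\sigma\cdot(x+\tau,z)$ for all $\tau=a/\sqrt{d-1}$, $a\in\mathbb{Z}^{d-1}$, and $\sigma=2^b$, $b\in\mathbb{Z}$. $\|\cdot\|$ is the Euclidean norm on $\mathbb{R}^{d-1}$. *)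

theory Defs
  imports "HOL-Analysis.Analysis"
begin

text \<open>Upper half-space model of H^d with d - 1 = CARD('n) (so d \<ge> 2 automatically).
  A point is a pair (x, z) with x :: real^'n and z > 0.\<close>

definition in_H :: "(real^'n) \<times> real \<Rightarrow> bool" where
  "in_H p \<longleftrightarrow> snd p > 0"

text \<open>Geodesic segment between p and q in the half-space model: a vertical segment
  if x(p) = x(q); otherwise the arc, between p and q, of the Euclidean circle through p and q
  lying in the vertical plane over the line through x(p), x(q), centred on {z = 0}.\<close>

definition geodesic_segment :: "(real^'n) \<times> real \<Rightarrow> (real^'n) \<times> real \<Rightarrow> ((real^'n) \<times> real) set" where
  "geodesic_segment p q =
    (if fst p = fst q then
       {(x, z). x = fst p \<and> min (snd p) (snd q) \<le> z \<and> z \<le> max (snd p) (snd q)}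
     else
       {(x, z). z > 0 \<and>
          (\<exists>s::real. 0 \<le> s \<and> s \<le> 1 \<and> x = fst p + s *\<^sub>R (fst q - fst p)) \<and>
          (\<exists>c::real^'n. (\<exists>\<mu>::real. c = fst p + \<mu> *\<^sub>R (fst q - fst p)) \<and>
              (norm (fst p - c))\<^sup>2 + (snd p)\<^sup>2 = (norm (fst q - c))\<^sup>2 + (snd q)\<^sup>2 \<and>
              (norm (x - c))\<^sup>2 + z\<^sup>2 = (norm (fst p - c))\<^sup>2 + (snd p)\<^sup>2)})"

text \<open>Tile of the binary tiling T^0 with translation a/sqrt(d-1) and scale 2^b:
  image of [0,1/sqrt(d-1)]^(d-1) \<times> [1,2] under (x,z) \<mapsto> 2^b (x + a/sqrt(d-1), z).\<close>

definition bin_tile :: "int^'n \<Rightarrow> int \<Rightarrow> ((real^'n) \<times> real) set" where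
  "bin_tile a b =
    {(x, z). (\<forall>i. (2 powi b) * (of_int (a $ i) / sqrt (real CARD('n))) \<le> x $ i \<and>
                   x $ i \<le> (2 powi b) * ((of_int (a $ i) + 1) / sqrt (real CARD('n)))) \<and>
             (2 powi b) \<le> z \<and> z \<le> (2 powi b) * 2}"

definition binary_tiling :: "((real^'n) \<times> real) set set" where
  "binary_tiling = {C. \<exists>a b. C = bin_tile a b}"

end

theory Submission
  imports Defs
begin

text \<open>The tile \<open>bin_tile a b\<close> has heights in \<open>[2^b, 2^(b+1)]\<close> and its \<open>x\<close>-projection is a cube of
  side \<open>2^b / sqrt (d - 1)\<close> in \<open>\<real>^(d-1)\<close>, whose diameter is exactly \<open>2^b\<close>; so every tile is at
  least half as wide as it is high. On the other hand the highest point of the segment \<open>pq\<close> lies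
  above height \<open>|x(p) - x(q)| / 2\<close>: either the top of the semicircle carrying \<open>pq\<close> lies on the
  segment, and the radius of that semicircle exceeds half its chord, or it does not, and then
  one endpoint is already higher than the whole chord \<open>|x(p) - x(q)|\<close>.\<close>

lemma norm_vec_real: "norm (vec c :: real^'n) = sqrt (real CARD('n)) * \<bar>c\<bar>"
  by (simp add: norm_vec_def L2_set_constant)

definition tile_corner :: "int^'n \<Rightarrow> int \<Rightarrow> real^'n" where
  "tile_corner a b = (\<chi> i. 2 powi b * (of_int (a $ i) / sqrt (real CARD('n))))"

lemma bin_tile_eq_Times:
  fixes a :: "int^'n"
  shows "bin_tile a b =
     cbox (tile_corner a b) (tile_corner a b + vec (2 powi b / sqrt (real CARD('n))))
       \<times> {2 powi b .. 2 * 2 powi b}"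
  by (auto simp: bin_tile_def tile_corner_def mem_box_cart add_divide_distrib algebra_simps)

lemma diameter_fst_bin_tile:
  fixes a :: "int^'n"
  shows "diameter (fst ` bin_tile a b) = 2 powi b"
proof -
  let ?x0 = "tile_corner a b" and ?w = "2 powi b / sqrt (real CARD('n))"
  have "?w \<ge> 0" by simp
  then have "diameter (cbox ?x0 (?x0 + vec ?w)) = dist ?x0 (?x0 + vec ?w)"
    by (intro diameter_cbox) (auto simp: Basis_vec_def inner_axis)
  also have "\<dots> = 2 powi b"
    by (simp add: dist_norm norm_vec_real)
  finally show ?thesis
    by (simp add: bin_tile_eq_Times fst_image_times)
qed

text \<open>In the vertical plane over the chord, scaled so that the chord is \<open>[0, D]\<close>, the equation
  \<open>(\<mu> D)\<^sup>2 + zp\<^sup>2 = ((1 - \<mu>) D)\<^sup>2 + zq\<^sup>2\<close> says that \<open>(0, zp)\<close> and \<open>(D, zq)\<close> are equidistant from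
  \<open>(\<mu> D, 0)\<close>, the centre of the geodesic semicircle through them.\<close>

lemma exists_equidistant_centre:
  fixes D zp zq :: real
  assumes "D \<noteq> 0"
  shows "\<exists>\<mu>. (\<mu> * D)\<^sup>2 + zp\<^sup>2 = ((1 - \<mu>) * D)\<^sup>2 + zq\<^sup>2"
proof
  show "(((zq\<^sup>2 - zp\<^sup>2) / D\<^sup>2 + 1) / 2 * D)\<^sup>2 + zp\<^sup>2
          = ((1 - ((zq\<^sup>2 - zp\<^sup>2) / D\<^sup>2 + 1) / 2) * D)\<^sup>2 + zq\<^sup>2"
    using assms by (simp add: power2_eq_square field_simps)
qed

lemma half_chord_lt_radius:
  fixes \<mu> D zp zq :: real
  assumes equidistant: "(\<mu> * D)\<^sup>2 + zp\<^sup>2 = ((1 - \<mu>) * D)\<^sup>2 + zq\<^sup>2"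
    and "zp > 0" and "zq > 0" and "D \<ge> 0"
  shows "D / 2 < sqrt ((\<mu> * D)\<^sup>2 + zp\<^sup>2)"
proof (rule real_less_rsqrt)
  have "(D / 2)\<^sup>2 \<le> (\<mu> * D)\<^sup>2 \<or> (D / 2)\<^sup>2 \<le> ((1 - \<mu>) * D)\<^sup>2"
  proof (cases "\<mu> \<ge> 1 / 2")
    case True
    then have "D / 2 \<le> \<mu> * D"
      using mult_right_mono[of "1 / 2" \<mu> D] \<open>D \<ge> 0\<close> by simp
    then show ?thesis using \<open>D \<ge> 0\<close> by (intro disjI1 power_mono) auto
  next
    case False
    then have "D / 2 \<le> (1 - \<mu>) * D"
      using mult_right_mono[of "1 / 2" "1 - \<mu>" D] \<open>D \<ge> 0\<close> by simp
    then show ?thesis using \<open>D \<ge> 0\<close> by (intro disjI2 power_mono) auto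
  qed
  moreover have "zp\<^sup>2 > 0" "zq\<^sup>2 > 0"
    using \<open>zp > 0\<close> \<open>zq > 0\<close> by simp_all
  ultimately show "(D / 2)\<^sup>2 < (\<mu> * D)\<^sup>2 + zp\<^sup>2"
    using equidistant by linarith
qed

lemma chord_le_endpoint_height:
  fixes \<mu> D zp zq :: real
  assumes equidistant: "(\<mu> * D)\<^sup>2 + zp\<^sup>2 = ((1 - \<mu>) * D)\<^sup>2 + zq\<^sup>2"
    and "\<mu> < 0" and "zp > 0" and "D \<ge> 0"
  shows "D \<le> zp"
proof (rule power2_le_imp_le)
  have "zp\<^sup>2 = (1 - 2 * \<mu>) * D\<^sup>2 + zq\<^sup>2"
    using equidistant by (simp add: power2_eq_square algebra_simps)
  also have "\<dots> \<ge> D\<^sup>2"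
    using \<open>\<mu> < 0\<close> mult_right_mono[of 1 "1 - 2 * \<mu>" "D\<^sup>2"] by (simp add: add_increasing2)
  finally show "D\<^sup>2 \<le> zp\<^sup>2" .
qed (use \<open>zp > 0\<close> in simp)

lemma geodesic_segment_arcI:
  assumes "fst p \<noteq> fst q"
    and "c = fst p + \<mu> *\<^sub>R (fst q - fst p)"
    and "(norm (fst p - c))\<^sup>2 + (snd p)\<^sup>2 = (norm (fst q - c))\<^sup>2 + (snd q)\<^sup>2"
    and "z > 0" and "0 \<le> s" and "s \<le> 1" and "x = fst p + s *\<^sub>R (fst q - fst p)"
    and "(norm (x - c))\<^sup>2 + z\<^sup>2 = (norm (fst p - c))\<^sup>2 + (snd p)\<^sup>2"
  shows "(x, z) \<in> geodesic_segment p q"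
  using assms unfolding geodesic_segment_def by auto

lemma geodesic_segment_arc_points:
  fixes p q :: "(real^'n) \<times> real"
  defines "D \<equiv> norm (fst p - fst q)"
  assumes "in_H p" and "in_H q" and "fst p \<noteq> fst q"
  obtains \<mu> where "(\<mu> * D)\<^sup>2 + (snd p)\<^sup>2 = ((1 - \<mu>) * D)\<^sup>2 + (snd q)\<^sup>2"
    and "p \<in> geodesic_segment p q" and "q \<in> geodesic_segment p q"
    and "\<lbrakk>0 \<le> \<mu>; \<mu> \<le> 1\<rbrakk> \<Longrightarrow>
      (fst p + \<mu> *\<^sub>R (fst q - fst p), sqrt ((\<mu> * D)\<^sup>2 + (snd p)\<^sup>2)) \<in> geodesic_segment p q"
proof -
  obtain xp zp xq zq where p: "p = (xp, zp)" and q: "q = (xq, zq)"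
    by (cases p, cases q)
  have "zp > 0" "zq > 0" "xp \<noteq> xq"
    using assms by (auto simp: p q in_H_def)
  have "D \<noteq> 0" using \<open>xp \<noteq> xq\<close> by (simp add: D_def p q)
  obtain \<mu> where equidistant: "(\<mu> * D)\<^sup>2 + zp\<^sup>2 = ((1 - \<mu>) * D)\<^sup>2 + zq\<^sup>2"
    using exists_equidistant_centre[OF \<open>D \<noteq> 0\<close>] by blast
  define c where "c = xp + \<mu> *\<^sub>R (xq - xp)"
  have dist_p_c: "norm (xp - c) = \<bar>\<mu>\<bar> * D"
    by (simp add: c_def D_def p q norm_minus_commute)
  have "xq - c = (1 - \<mu>) *\<^sub>R (xq - xp)"
    by (simp add: c_def algebra_simps)
  then have dist_q_c: "norm (xq - c) = \<bar>1 - \<mu>\<bar> * D"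
    by (simp add: D_def p q norm_minus_commute)
  have on_arc: "(x, z) \<in> geodesic_segment p q"
    if "z > 0" "0 \<le> s" "s \<le> 1" "x = xp + s *\<^sub>R (xq - xp)"
       "(norm (x - c))\<^sup>2 + z\<^sup>2 = (\<mu> * D)\<^sup>2 + zp\<^sup>2" for x z s
  proof (rule geodesic_segment_arcI[where c = c and \<mu> = \<mu> and s = s])
    show "c = fst p + \<mu> *\<^sub>R (fst q - fst p)"
      by (simp add: p q c_def)
    show "(norm (fst p - c))\<^sup>2 + (snd p)\<^sup>2 = (norm (fst q - c))\<^sup>2 + (snd q)\<^sup>2"
      using equidistant by (simp add: p q dist_p_c dist_q_c power_mult_distrib)
  qed (use that \<open>xp \<noteq> xq\<close> in \<open>simp_all add: p q dist_p_c power_mult_distrib\<close>)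
  show thesis
  proof
    show "(\<mu> * D)\<^sup>2 + (snd p)\<^sup>2 = ((1 - \<mu>) * D)\<^sup>2 + (snd q)\<^sup>2"
      using equidistant by (simp add: p q)
    show "p \<in> geodesic_segment p q"
      using on_arc[of zp 0 xp] \<open>zp > 0\<close> by (simp add: p dist_p_c power_mult_distrib)
    show "q \<in> geodesic_segment p q"
      using on_arc[of zq 1 xq] \<open>zq > 0\<close> equidistant by (simp add: q dist_q_c power_mult_distrib)
    show "(fst p + \<mu> *\<^sub>R (fst q - fst p), sqrt ((\<mu> * D)\<^sup>2 + (snd p)\<^sup>2)) \<in> geodesic_segment p q"
      if "0 \<le> \<mu>" "\<mu> \<le> 1"
      using on_arc[of "sqrt ((\<mu> * D)\<^sup>2 + zp\<^sup>2)" \<mu> c] that \<open>zp > 0\<close>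
      by (simp add: p q c_def add_nonneg_pos)
  qed
qed

lemma geodesic_segment_height_gt_half_width:
  assumes "in_H p" and "in_H q" and "fst p \<noteq> fst q"
  shows "\<exists>s \<in> geodesic_segment p q. snd s > norm (fst p - fst q) / 2"
proof -
  define D where "D = norm (fst p - fst q)"
  have "D > 0" "snd p > 0" "snd q > 0"
    using assms by (auto simp: D_def in_H_def)
  obtain \<mu> where equidistant: "(\<mu> * D)\<^sup>2 + (snd p)\<^sup>2 = ((1 - \<mu>) * D)\<^sup>2 + (snd q)\<^sup>2"
    and p_on: "p \<in> geodesic_segment p q" and q_on: "q \<in> geodesic_segment p q"
    and top_on: "\<lbrakk>0 \<le> \<mu>; \<mu> \<le> 1\<rbrakk> \<Longrightarrow>
      (fst p + \<mu> *\<^sub>R (fst q - fst p), sqrt ((\<mu> * D)\<^sup>2 + (snd p)\<^sup>2)) \<in> geodesic_segment p q"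
    using geodesic_segment_arc_points[OF assms] unfolding D_def by blast
  consider "\<mu> < 0" | "0 \<le> \<mu>" "\<mu> \<le> 1" | "\<mu> > 1" by linarith
  then have "\<exists>s \<in> geodesic_segment p q. snd s > D / 2"
  proof cases
    case 1
    then have "D \<le> snd p"
      using chord_le_endpoint_height[OF equidistant] \<open>snd p > 0\<close> \<open>D > 0\<close> by simp
    then show ?thesis
      using p_on \<open>D > 0\<close> by (intro bexI[of _ p]) auto
  next
    case 3
    have "D \<le> snd q"
      using chord_le_endpoint_height[of "1 - \<mu>" D "snd q" "snd p"] equidistant 3 \<open>snd q > 0\<close> \<open>D > 0\<close>
      by simp
    then show ?thesis
      using q_on \<open>D > 0\<close> by (intro bexI[of _ q]) auto
  next
    case 2
    then show ?thesis
      using top_on half_chord_lt_radius[OF equidistant \<open>snd p > 0\<close> \<open>snd q > 0\<close>] \<open>D > 0\<close>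
      by (intro bexI) auto
  qed
  then show ?thesis
    by (simp add: D_def)
qed

theorem mainTheorem10:
  fixes p q t :: "(real^'n) \<times> real" and C :: "((real^'n) \<times> real) set"
  assumes "in_H p" and "in_H q"
    and "t \<in> geodesic_segment p q"
    and "\<forall>s \<in> geodesic_segment p q. snd s \<le> snd t"
    and "C \<in> binary_tiling" and "t \<in> C"
  shows "diameter (fst ` C) > norm (fst p - fst q) / 4"
proof -
  obtain a b where C: "C = bin_tile a b"
    using assms(5) by (auto simp: binary_tiling_def)
  have diam: "diameter (fst ` C) = 2 powi b"
    by (simp add: C diameter_fst_bin_tile)
  have height: "snd t \<le> 2 * 2 powi b"
    using assms(6) by (auto simp: C bin_tile_eq_Times)
  show ?thesis
  proof (cases "fst p = fst q")
    case True
    then show ?thesis by (simp add: diam)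
  next
    case False
    then obtain s where "s \<in> geodesic_segment p q" "snd s > norm (fst p - fst q) / 2"
      using geodesic_segment_height_gt_half_width[OF assms(1,2)] by blast
    then have "snd t > norm (fst p - fst q) / 2"
      using assms(4) by force
    then show ?thesis
      using diam height by linarith
  qed
qed

end
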